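(* Let $a>0$, $T>0$, $\beta\in(1,2)$, and let $n>1$ be an integer. Let $s_1,\dots,s_n$ and $w_1,\dots,w_n$ be the nodes and weights of the $n$-point Gauss–Jacobi quadrature on $[0,a]$ with weight function $s^{\beta-1}$. Then for every $0<t<T$, $$\left|\int_0^a e^{-ts}s^{\beta-1}\,ds-\sum_{k=1}^n w_k e^{-s_k t}\right|<2\sqrt{\pi}\,a^\beta n^{3/2}\left(\frac{e}{8}\right)^{2n}\left(\frac{aT}{n}\right)^{2n}.$$
   Context: The $n$-point Gauss–Jacobi quadrature on $[0,a]$ with weight $s^{\beta-1}$ is the rule $\int_0^a \phi(s)s^{\beta-1}\,ds\approx\sum_{k=1}^n w_k\phi(s_k)$ that is exact for all polynomials $\phi$ of degree at most $2n-1$. *)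

theory Defs
  imports "HOL-Analysis.Analysis" "HOL-Computational_Algebra.Polynomial"
begin

text \<open>The n-point Gauss--Jacobi quadrature on [0,a] with weight s^(beta-1):
  nodes s 1, ..., s n and weights w 1, ..., w n such that the rule is exact
  for all real polynomials of degree at most 2n-1.  (Such a rule is unique.)\<close>
definition gauss_jacobi_rule ::
  "real \<Rightarrow> real \<Rightarrow> nat \<Rightarrow> (nat \<Rightarrow> real) \<Rightarrow> (nat \<Rightarrow> real) \<Rightarrow> bool" where
  "gauss_jacobi_rule a \<beta> n s w \<longleftrightarrow>
     (\<forall>p :: real poly. degree p \<le> 2 * n - 1 \<longrightarrow>
        integral {0..a} (\<lambda>x. poly p x * x powr (\<beta> - 1))
          = (\<Sum>k = 1..n. w k * poly p (s k)))"

end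

theory Submission
  imports Defs
begin

text \<open>
  Interpolate exp(-t x) at the 2n zeros of the Chebyshev polynomial T_2n transported to [0,a].
  The classical error formula f - p = f^(2n)(\<xi>) \<omega> / (2n)!, with node polynomial \<omega> a multiple
  of the shifted T_2n and |T_2n| \<le> 1, gives a polynomial p of degree < 2n with
  |exp(-t x) - p x| \<le> 2 (a t / 4)^(2n) / (2n)! on [0,a].
  The Gauss-Jacobi rule integrates p exactly; testing it on squared node polynomials shows that
  its nodes lie in [0,a] and its weights are positive, and they sum to the integral of
  s^(\<beta>-1) over [0,a], which is a^\<beta>/\<beta>. Hence the quadrature error for exp(-t x) is at most twice
  the uniform error times a^\<beta>, and (2n)! \<ge> (2n/e)^(2n) turns this into the stated bound with
  room to spare.
\<close>

lemma Rolle_card_zeros: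
  fixes g g' :: "real \<Rightarrow> real"
  assumes der: "\<And>y. (g has_real_derivative g' y) (at y)"
    and "finite Z" and "card Z = Suc k" and "\<forall>z\<in>Z. g z = 0"
  shows "\<exists>Z'. finite Z' \<and> card Z' = k \<and> Z' \<subseteq> {Min Z..Max Z} \<and> (\<forall>z\<in>Z'. g' z = 0)"
  using assms(2-4)
proof (induction k arbitrary: Z)
  case 0
  then show ?case by auto
next
  case (Suc k)
  define z0 where "z0 = Min Z"
  define Z1 where "Z1 = Z - {z0}"
  have "Z \<noteq> {}" using Suc.prems(2) by auto
  then have z0: "z0 \<in> Z" using Suc.prems(1) by (simp add: z0_def)
  have Z1: "finite Z1" "card Z1 = Suc k" "\<forall>z\<in>Z1. g z = 0"
    using Suc.prems z0 by (auto simp: Z1_def)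
  obtain Z1' where Z1': "finite Z1'" "card Z1' = k" "Z1' \<subseteq> {Min Z1..Max Z1}" "\<forall>z\<in>Z1'. g' z = 0"
    using Suc.IH[OF Z1] by blast
  define z1 where "z1 = Min Z1"
  have "Z1 \<noteq> {}" using Z1(2) by auto
  then have z1: "z1 \<in> Z1" using Z1(1) by (simp add: z1_def)
  then have "z0 < z1" "z1 \<le> Max Z" using Suc.prems(1) by (auto simp: z0_def Z1_def less_le)
  moreover have "g z0 = g z1" using Suc.prems(3) z0 z1 by (auto simp: Z1_def)
  moreover have "continuous_on {z0..z1} g"
    using der by (meson DERIV_isCont continuous_at_imp_continuous_on)
  ultimately obtain \<zeta> where \<zeta>: "z0 < \<zeta>" "\<zeta> < z1" "DERIV g \<zeta> :> 0"
    using Rolle der real_differentiable_def by metis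
  have "g' \<zeta> = 0" using DERIV_unique[OF der \<zeta>(3)] .
  moreover have "\<zeta> \<notin> Z1'" using Z1'(3) \<zeta>(2) by (auto simp: z1_def)
  moreover have "{Min Z1..Max Z1} \<subseteq> {Min Z..Max Z}"
    using Suc.prems(1) Z1(1) \<open>Z1 \<noteq> {}\<close> by (auto simp: Z1_def intro: Min_antimono Max_mono)
  ultimately show ?case using Z1' \<zeta> \<open>z1 \<le> Max Z\<close>
    by (intro exI[of _ "insert \<zeta> Z1'"]) (auto simp: z0_def)
qed

lemma Rolle_higher_derivative:
  fixes D :: "nat \<Rightarrow> real \<Rightarrow> real"
  assumes "\<And>k y. k < m \<Longrightarrow> (D k has_real_derivative D (Suc k) y) (at y)"
    and "finite Z" and "card Z = Suc m" and "Z \<subseteq> {lo..hi}" and "\<forall>z\<in>Z. D 0 z = 0"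
  shows "\<exists>\<xi>\<in>{lo..hi}. D m \<xi> = 0"
  using assms
proof (induction m arbitrary: D Z)
  case 0
  then obtain z where "Z = {z}" using card_1_singletonE[of Z] by auto
  then show ?case using 0 by auto
next
  case (Suc m)
  obtain Z' where Z': "finite Z'" "card Z' = Suc m" "Z' \<subseteq> {Min Z..Max Z}" "\<forall>z\<in>Z'. D 1 z = 0"
    using Rolle_card_zeros[OF _ Suc.prems(2,3,5), of "D 1"] Suc.prems(1) by auto
  have "Z \<noteq> {}" using Suc.prems(3) by auto
  then have "{Min Z..Max Z} \<subseteq> {lo..hi}" using Suc.prems(2,4) by auto
  then have "Z' \<subseteq> {lo..hi}" using Z'(3) by blast
  then have "\<exists>\<xi>\<in>{lo..hi}. D (Suc m) \<xi> = 0"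
    using Suc.IH[of "\<lambda>k. D (Suc k)" Z'] Suc.prems(1) Z' by auto
  then show ?case .
qed

lemma higher_pderiv_degree_le:
  fixes q :: "'a::{comm_semiring_1,semiring_no_zero_divisors,semiring_char_0} poly"
  assumes "degree q \<le> k"
  shows "(pderiv ^^ k) q = [:fact k * coeff q k:]"
proof (rule poly_eqI)
  fix n
  show "coeff ((pderiv ^^ k) q) n = coeff [:fact k * coeff q k:] n"
    using assms by (cases n) (auto simp: coeff_higher_pderiv pochhammer_fact coeff_eq_0)
qed

lemma interpolation_poly_exists:
  fixes f :: "'a::field \<Rightarrow> 'a"
  assumes "finite X"
  shows "\<exists>p. degree p \<le> card X - 1 \<and> (\<forall>x\<in>X. poly p x = f x)"
  using assms
proof (induction X rule: finite_induct)
  case empty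
  then show ?case by (intro exI[of _ 0]) auto
next
  case (insert x X)
  then obtain p where p: "degree p \<le> card X - 1" "\<forall>y\<in>X. poly p y = f y" by blast
  define Q where "Q = (\<Prod>y\<in>X. [:-y, 1:])"
  have degQ: "degree Q \<le> card X"
    using degree_prod_sum_le[OF insert(1), of "\<lambda>y. [:-y,1:]"] by (simp add: Q_def)
  have poly_Q: "poly Q z = (\<Prod>y\<in>X. z - y)" for z by (simp add: Q_def poly_prod)
  define p' where "p' = p + smult ((f x - poly p x) / poly Q x) Q"
  have "degree p' \<le> card X"
    unfolding p'_def using p(1) degQ
    by (meson degree_add_le degree_smult_le le_diff_conv order.trans le_add1)
  moreover have "\<forall>y\<in>insert x X. poly p' y = f y"
    using p(2) insert(1,2) by (auto simp: p'_def poly_Q)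
  ultimately show ?case using insert by auto
qed

lemma interpolation_error:
  fixes D :: "nat \<Rightarrow> real \<Rightarrow> real" and p \<omega> :: "real poly"
  assumes der: "\<And>k y. k < m \<Longrightarrow> (D k has_real_derivative D (Suc k) y) (at y)"
    and X: "finite X" "card X = m" "X \<subseteq> {lo..hi}"
    and p: "degree p < m" "\<forall>x\<in>X. poly p x = D 0 x"
    and \<omega>: "degree \<omega> = m" "\<forall>x\<in>X. poly \<omega> x = 0"
    and x: "x \<in> {lo..hi}"
  shows "\<exists>\<xi>\<in>{lo..hi}. D 0 x - poly p x = D m \<xi> / (fact m * lead_coeff \<omega>) * poly \<omega> x"
proof (cases "x \<in> X")
  case True
  then show ?thesis using p(2) \<omega>(2) x by auto
next
  case False
  have "\<omega> \<noteq> 0" using p(1) \<omega>(1) by auto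
  have \<omega>x: "poly \<omega> x \<noteq> 0"
  proof
    assume "poly \<omega> x = 0"
    then have "insert x X \<subseteq> {y. poly \<omega> y = 0}" using \<omega>(2) by auto
    then have "card (insert x X) \<le> card {y. poly \<omega> y = 0}"
      using poly_roots_finite[OF \<open>\<omega> \<noteq> 0\<close>] by (rule card_mono[rotated])
    also have "\<dots> \<le> m" using card_poly_roots_bound[OF \<open>\<omega> \<noteq> 0\<close>] \<omega>(1) by simp
    finally show False using False X by simp
  qed
  define K where "K = (D 0 x - poly p x) / poly \<omega> x"
  \<comment> \<open>G 0 vanishes at x and at the m nodes, and differentiating m times kills p.\<close>
  define G where "G k y = D k y - poly ((pderiv ^^ k) p) y - K * poly ((pderiv ^^ k) \<omega>) y" for k y
  have "(G k has_real_derivative G (Suc k) y) (at y)" if "k < m" for k y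
    unfolding G_def[abs_def] funpow.simps o_def by (intro DERIV_diff DERIV_cmult poly_DERIV der that)
  moreover have "\<forall>z\<in>insert x X. G 0 z = 0"
    using p(2) \<omega>(2) \<omega>x by (auto simp: G_def K_def)
  ultimately obtain \<xi> where \<xi>: "\<xi> \<in> {lo..hi}" "G m \<xi> = 0"
    using Rolle_higher_derivative[of m G "insert x X" lo hi] X False x by auto
  have "(pderiv ^^ m) p = 0"
    using p(1) higher_pderiv_degree_le[of p m] by (simp add: coeff_eq_0)
  moreover have "(pderiv ^^ m) \<omega> = [:fact m * lead_coeff \<omega>:]"
    using higher_pderiv_degree_le[of \<omega> m] \<omega>(1) by simp
  ultimately have "D m \<xi> = K * (fact m * lead_coeff \<omega>)" using \<xi>(2) by (simp add: G_def)
  then have "K = D m \<xi> / (fact m * lead_coeff \<omega>)" using \<open>\<omega> \<noteq> 0\<close> by simp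
  moreover have "D 0 x - poly p x = K * poly \<omega> x" using \<omega>x by (simp add: K_def)
  ultimately show ?thesis using \<xi>(1) by auto
qed

fun chebyshev :: "nat \<Rightarrow> real poly" where
  "chebyshev 0 = 1"
| "chebyshev (Suc 0) = [:0, 1:]"
| "chebyshev (Suc (Suc k)) = [:0, 2:] * chebyshev (Suc k) - chebyshev k"

lemma poly_chebyshev_cos: "poly (chebyshev k) (cos \<theta>) = cos (real k * \<theta>)"
proof (induction k rule: chebyshev.induct)
  case (3 k)
  have "cos (real (Suc (Suc k)) * \<theta>) + cos (real k * \<theta>) = 2 * cos \<theta> * cos (real (Suc k) * \<theta>)"
    using cos_add[of "real (Suc k) * \<theta>" \<theta>] cos_diff[of "real (Suc k) * \<theta>" \<theta>]
    by (simp add: algebra_simps)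
  then show ?case using 3 by simp
qed simp_all

lemma degree_coeff_chebyshev:
  "degree (chebyshev k) = k \<and> coeff (chebyshev k) k = (if k = 0 then 1 else 2 ^ (k - 1))"
proof (induction k rule: chebyshev.induct)
  case (3 k)
  define A where "A = [:0, 2:] * chebyshev (Suc k)"
  have "chebyshev (Suc k) \<noteq> 0" using 3 by (metis nat.distinct(1) degree_0)
  then have A: "degree A = Suc (Suc k)" "coeff A (Suc (Suc k)) = 2 ^ Suc k"
    using 3 by (simp_all add: A_def degree_mult_eq)
  have "degree (chebyshev k) < degree A" using 3 A by simp
  then have "degree (A - chebyshev k) = degree A"
    using degree_add_eq_left[of "- chebyshev k" A] by simp
  then show ?case
    unfolding chebyshev.simps A_def[symmetric] using A 3 by (simp add: coeff_eq_0)
qed simp_all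

lemma abs_poly_chebyshev_le_1:
  assumes "\<bar>y\<bar> \<le> 1"
  shows "\<bar>poly (chebyshev k) y\<bar> \<le> 1"
  using poly_chebyshev_cos[of k "arccos y"] assms by (simp add: cos_arccos_abs)

lemma poly_chebyshev_node:
  assumes "0 < k"
  shows "poly (chebyshev k) (cos ((2 * real j + 1) * pi / (2 * real k))) = 0"
proof -
  have "real k * ((2 * real j + 1) * pi / (2 * real k)) = real_of_int (int (2 * j + 1)) * (pi / 2)"
    using assms by (simp add: field_simps)
  then show ?thesis
    by (simp only: poly_chebyshev_cos cos_zero_iff_int) (auto intro!: exI[of _ "int (2 * j + 1)"])
qed

definition shifted_chebyshev :: "real \<Rightarrow> real \<Rightarrow> nat \<Rightarrow> real poly" where
  "shifted_chebyshev lo hi m = pcompose (chebyshev m) [:- (hi + lo) / (hi - lo), 2 / (hi - lo):]"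

lemma poly_shifted_chebyshev:
  "poly (shifted_chebyshev lo hi m) x = poly (chebyshev m) ((2 * x - (hi + lo)) / (hi - lo))"
  by (simp add: shifted_chebyshev_def poly_pcompose diff_divide_distrib add_divide_distrib algebra_simps)

lemma degree_lead_coeff_shifted_chebyshev:
  assumes "lo < hi" and "0 < m"
  shows "degree (shifted_chebyshev lo hi m) = m"
    and "lead_coeff (shifted_chebyshev lo hi m) = 1 / (2 * ((hi - lo) / 4) ^ m)"
proof -
  have T: "degree (chebyshev m) = m" "lead_coeff (chebyshev m) = 2 ^ (m - 1)"
    using degree_coeff_chebyshev[of m] \<open>0 < m\<close> by simp_all
  show "degree (shifted_chebyshev lo hi m) = m"
    using T(1) assms(1) by (simp add: shifted_chebyshev_def degree_pcompose)
  have "lead_coeff (shifted_chebyshev lo hi m) = 2 ^ (m - 1) * (2 / (hi - lo)) ^ m"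
    using lead_coeff_comp[of "[:- (hi + lo) / (hi - lo), 2 / (hi - lo):]" "chebyshev m"] T assms(1)
    by (simp add: shifted_chebyshev_def)
  also have "\<dots> = 1 / (2 * ((hi - lo) / 4) ^ m)"
    using assms by (cases m) (simp_all add: power_divide field_simps flip: power_mult_distrib)
  finally show "lead_coeff (shifted_chebyshev lo hi m) = 1 / (2 * ((hi - lo) / 4) ^ m)" .
qed

lemma abs_poly_shifted_chebyshev_le_1:
  assumes "x \<in> {lo..hi}"
  shows "\<bar>poly (shifted_chebyshev lo hi m) x\<bar> \<le> 1"
proof (cases "lo < hi")
  case True
  have "\<bar>2 * x - (hi + lo)\<bar> \<le> hi - lo" using assms by (auto simp: abs_le_iff)
  then have "\<bar>(2 * x - (hi + lo)) / (hi - lo)\<bar> \<le> 1" using True by (simp add: abs_divide divide_le_eq)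
  then show ?thesis by (simp add: poly_shifted_chebyshev abs_poly_chebyshev_le_1)
next
  case False
  then have "hi = lo" using assms by simp
  then show ?thesis using abs_poly_chebyshev_le_1[of 0 m] by (simp add: poly_shifted_chebyshev)
qed

lemma shifted_chebyshev_zeros:
  assumes "lo < hi" and "0 < m"
  obtains X where "finite X" "card X = m" "X \<subseteq> {lo..hi}"
    "\<forall>x\<in>X. poly (shifted_chebyshev lo hi m) x = 0"
proof -
  define u where "u j = (2 * real j + 1) * pi / (2 * real m)" for j
  define node where "node j = (hi + lo) / 2 + (hi - lo) / 2 * cos (u j)" for j
  have u_range: "0 \<le> u j \<and> u j \<le> pi" if "j < m" for j
  proof -
    have "(2 * real j + 1) * pi \<le> (2 * real m) * pi" using that by (intro mult_right_mono) auto
    then show ?thesis using that by (simp add: u_def field_simps)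
  qed
  have "inj_on node {..<m}"
  proof (rule inj_onI)
    fix i j assume "i \<in> {..<m}" "j \<in> {..<m}" "node i = node j"
    then have "u i = u j" using assms(1) u_range cos_inj_pi by (simp add: node_def)
    then show "i = j" using \<open>0 < m\<close> by (simp add: u_def)
  qed
  moreover have "node j \<in> {lo..hi}" for j
  proof -
    define y where "y = (hi - lo) / 2 * cos (u j)"
    have "\<bar>y\<bar> \<le> (hi - lo) / 2" using assms(1) by (simp add: y_def abs_mult)
    then show ?thesis unfolding node_def y_def[symmetric] atLeastAtMost_iff abs_le_iff by (auto simp: field_simps)
  qed
  moreover have "poly (shifted_chebyshev lo hi m) (node j) = 0" for j
  proof -
    have "(2 * node j - (hi + lo)) / (hi - lo) = cos (u j)" using assms(1) by (simp add: node_def field_simps)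
    then show ?thesis using assms(2) by (simp add: poly_shifted_chebyshev u_def poly_chebyshev_node)
  qed
  ultimately show ?thesis
    by (intro that[of "node ` {..<m}"]) (auto simp: card_image)
qed

lemma chebyshev_interpolation_bound:
  fixes D :: "nat \<Rightarrow> real \<Rightarrow> real"
  assumes "lo < hi" and "0 < m"
    and der: "\<And>k y. k < m \<Longrightarrow> (D k has_real_derivative D (Suc k) y) (at y)"
    and bound: "\<And>y. y \<in> {lo..hi} \<Longrightarrow> \<bar>D m y\<bar> \<le> M"
  shows "\<exists>p. degree p < m \<and>
           (\<forall>x\<in>{lo..hi}. \<bar>D 0 x - poly p x\<bar> \<le> 2 * M * ((hi - lo) / 4) ^ m / fact m)"
proof -
  let ?\<omega> = "shifted_chebyshev lo hi m" and ?C = "2 * ((hi - lo) / 4) ^ m / fact m"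
  obtain X where X: "finite X" "card X = m" "X \<subseteq> {lo..hi}" "\<forall>x\<in>X. poly ?\<omega> x = 0"
    using shifted_chebyshev_zeros[OF assms(1,2)] .
  obtain p where p: "degree p \<le> card X - 1" "\<forall>x\<in>X. poly p x = D 0 x"
    using interpolation_poly_exists[OF X(1)] by blast
  have "degree p < m" using p(1) X(2) \<open>0 < m\<close> by simp
  moreover have "\<bar>D 0 x - poly p x\<bar> \<le> M * ?C" if x: "x \<in> {lo..hi}" for x
  proof -
    note \<omega> = degree_lead_coeff_shifted_chebyshev[OF assms(1,2)]
    obtain \<xi> where \<xi>: "\<xi> \<in> {lo..hi}"
      and err: "D 0 x - poly p x = D m \<xi> / (fact m * lead_coeff ?\<omega>) * poly ?\<omega> x"
      using interpolation_error[OF der X(1-3) \<open>degree p < m\<close> p(2) \<omega>(1) X(4) x] by blast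
    have "\<bar>D m \<xi>\<bar> * \<bar>poly ?\<omega> x\<bar> \<le> M"
      using bound[OF \<xi>] abs_poly_shifted_chebyshev_le_1[OF x]
      by (meson abs_ge_zero mult_right_le_one_le order_trans)
    moreover have "\<bar>D 0 x - poly p x\<bar> = \<bar>D m \<xi>\<bar> * \<bar>poly ?\<omega> x\<bar> * ?C"
      using err assms(1) by (simp add: \<omega>(2) abs_mult)
    moreover have "0 \<le> ?C" using assms(1) by simp
    ultimately show ?thesis by (metis mult_right_mono)
  qed
  ultimately show ?thesis by (auto simp: mult_ac)
qed

lemma exp_neg_poly_approx:
  fixes t :: real
  assumes "0 \<le> lo" and "lo < hi" and "0 \<le> t" and "0 < m"
  shows "\<exists>p. degree p < m \<and>
           (\<forall>x\<in>{lo..hi}. \<bar>exp (- t * x) - poly p x\<bar> \<le> 2 * (t * (hi - lo) / 4) ^ m / fact m)"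
proof -
  have "((\<lambda>y. (- t) ^ k * exp (- t * y)) has_real_derivative (- t) ^ Suc k * exp (- t * y)) (at y)"
    for k y by (auto intro!: derivative_eq_intros)
  moreover have "\<bar>(- t) ^ m * exp (- t * y)\<bar> \<le> t ^ m" if "y \<in> {lo..hi}" for y
    using that assms by (simp add: abs_mult power_abs mult_left_le)
  moreover have "t ^ m * ((hi - lo) / 4) ^ m = (t * (hi - lo) / 4) ^ m"
    by (simp add: power_mult_distrib[symmetric])
  ultimately show ?thesis
    using chebyshev_interpolation_bound[of lo hi m "\<lambda>k y. (- t) ^ k * exp (- t * y)" "t ^ m"] assms
    by (simp add: mult.assoc)
qed

lemma positive_quadrature_error:
  fixes f g \<rho> :: "real \<Rightarrow> real"
  assumes cont: "continuous_on {lo..hi} f" "continuous_on {lo..hi} g" "continuous_on {lo..hi} \<rho>"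
    and \<rho>: "\<forall>x\<in>{lo..hi}. 0 \<le> \<rho> x"
    and nodes: "\<forall>k\<in>K. s k \<in> {lo..hi} \<and> 0 \<le> w k"
    and exact: "integral {lo..hi} (\<lambda>x. g x * \<rho> x) = (\<Sum>k\<in>K. w k * g (s k))"
      "integral {lo..hi} \<rho> = (\<Sum>k\<in>K. w k)"
    and approx: "\<forall>x\<in>{lo..hi}. \<bar>f x - g x\<bar> \<le> \<epsilon>"
  shows "\<bar>integral {lo..hi} (\<lambda>x. f x * \<rho> x) - (\<Sum>k\<in>K. w k * f (s k))\<bar>
           \<le> 2 * \<epsilon> * integral {lo..hi} \<rho>"
proof -
  have int: "(\<lambda>x. f x * \<rho> x) integrable_on {lo..hi}" "(\<lambda>x. g x * \<rho> x) integrable_on {lo..hi}"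
    "\<rho> integrable_on {lo..hi}"
    using cont by (auto intro!: integrable_continuous_interval continuous_on_mult)
  have "norm (integral {lo..hi} (\<lambda>x. (f x - g x) * \<rho> x)) \<le> integral {lo..hi} (\<lambda>x. \<epsilon> * \<rho> x)"
  proof (rule integral_norm_bound_integral)
    show "(\<lambda>x. (f x - g x) * \<rho> x) integrable_on {lo..hi}"
      using integrable_diff[OF int(1,2)] by (simp add: algebra_simps)
    show "(\<lambda>x. \<epsilon> * \<rho> x) integrable_on {lo..hi}" using integrable_cmul[OF int(3)] by simp
    show "norm ((f x - g x) * \<rho> x) \<le> \<epsilon> * \<rho> x" if "x \<in> {lo..hi}" for x
      using approx \<rho> that by (simp add: abs_mult mult_right_mono)
  qed
  then have "\<bar>integral {lo..hi} (\<lambda>x. (f x - g x) * \<rho> x)\<bar> \<le> \<epsilon> * integral {lo..hi} \<rho>" by simp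
  have "\<bar>\<Sum>k\<in>K. w k * (f (s k) - g (s k))\<bar> \<le> (\<Sum>k\<in>K. \<bar>w k * (f (s k) - g (s k))\<bar>)"
    by (rule sum_abs)
  also have "\<dots> \<le> (\<Sum>k\<in>K. w k * \<epsilon>)"
    using nodes approx by (intro sum_mono) (auto simp: abs_mult intro!: mult_left_mono)
  also have "\<dots> = \<epsilon> * integral {lo..hi} \<rho>"
    using exact(2) by (simp add: sum_distrib_left mult.commute)
  finally have "\<bar>\<Sum>k\<in>K. w k * (f (s k) - g (s k))\<bar> \<le> \<epsilon> * integral {lo..hi} \<rho>" .
  moreover have "integral {lo..hi} (\<lambda>x. f x * \<rho> x) - (\<Sum>k\<in>K. w k * f (s k))
      = integral {lo..hi} (\<lambda>x. (f x - g x) * \<rho> x) - (\<Sum>k\<in>K. w k * (f (s k) - g (s k)))"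
    using integral_diff[OF int(1,2)] exact(1) by (simp add: algebra_simps sum_subtractf)
  ultimately show ?thesis using \<open>\<bar>integral {lo..hi} (\<lambda>x. (f x - g x) * \<rho> x)\<bar> \<le> _\<close> by linarith
qed

lemma integral_poly_weight_pos:
  fixes q :: "real poly"
  assumes "a > 0" and "\<beta> > 1" and "q \<noteq> 0" and "\<forall>x\<in>{0..a}. 0 \<le> poly q x"
  shows "0 < integral {0..a} (\<lambda>x. poly q x * x powr (\<beta> - 1))"
proof -
  have c: "continuous_on {0..a} (\<lambda>x. poly q x * x powr (\<beta> - 1))"
    using assms(2) by (intro continuous_on_mult continuous_on_powr') (auto intro: continuous_intros)
  have nonneg: "\<And>x. x \<in> {0..a} \<Longrightarrow> 0 \<le> poly q x * x powr (\<beta> - 1)" using assms(4) by auto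
  have "integral {0..a} (\<lambda>x. poly q x * x powr (\<beta> - 1)) \<noteq> 0"
  proof
    assume "integral {0..a} (\<lambda>x. poly q x * x powr (\<beta> - 1)) = 0"
    then have "\<forall>x\<in>{0..a}. poly q x * x powr (\<beta> - 1) = 0"
      using integral_eq_0_iff[OF c assms(1) nonneg] by blast
    then have "{0<..a} \<subseteq> {x. poly q x = 0}" by auto
    then show False using poly_roots_finite[OF assms(3)] infinite_Ioc[OF assms(1)] finite_subset by blast
  qed
  moreover have "0 \<le> integral {0..a} (\<lambda>x. poly q x * x powr (\<beta> - 1))"
    using nonneg integrable_continuous_interval[OF c] by (intro integral_nonneg) auto
  ultimately show ?thesis by simp
qed

lemma gauss_jacobi_rule_nodes_weights:
  assumes "a > 0" and "\<beta> > 1" and rule: "gauss_jacobi_rule a \<beta> n s w" and k: "k \<in> {1..n}"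
  shows "s k \<in> {0..a}" and "0 < w k"
proof -
  define Q where "Q = (\<Prod>j\<in>{1..n} - {k}. [:- s j, 1:] ^ 2)"
  have "degree Q \<le> (\<Sum>j\<in>{1..n} - {k}. degree ([:- s j, 1:] ^ 2))"
    unfolding Q_def using degree_prod_sum_le[of "{1..n} - {k}" "\<lambda>j. [:- s j, 1:] ^ 2"] by (simp add: o_def)
  also have "\<dots> = 2 * (n - 1)" using k by (simp add: degree_power_eq card_Diff_singleton)
  finally have deg_Q: "degree Q \<le> 2 * (n - 1)" .
  have "1 \<le> n" using k by simp
  have "Q \<noteq> 0" by (simp add: Q_def)
  have Q_nonneg: "0 \<le> poly Q x" for x by (simp add: Q_def poly_prod prod_nonneg)
  have Q_zero: "poly Q (s i) = 0" if "i \<in> {1..n} - {k}" for i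
    using that by (auto simp: Q_def poly_prod prod_zero_iff)
  \<comment> \<open>A factor c of degree at most one keeps c * Q within the exactness degree 2n - 1,
      and the rule then sees only the node s k.\<close>
  have single: "integral {0..a} (\<lambda>x. poly (c * Q) x * x powr (\<beta> - 1)) = w k * poly c (s k) * poly Q (s k)"
    if "degree c \<le> 1" for c
  proof -
    have "degree (c * Q) \<le> 2 * n - 1"
      using degree_mult_le[of c Q] that deg_Q \<open>1 \<le> n\<close> by linarith
    then have "integral {0..a} (\<lambda>x. poly (c * Q) x * x powr (\<beta> - 1)) = (\<Sum>i = 1..n. w i * poly (c * Q) (s i))"
      using rule unfolding gauss_jacobi_rule_def by blast
    also have "\<dots> = w k * poly (c * Q) (s k)"
      using k Q_zero by (simp add: sum.remove sum.neutral)
    finally show ?thesis by simp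
  qed
  show "s k \<in> {0..a}"
  proof (rule ccontr)
    assume "s k \<notin> {0..a}"
    then obtain c where c: "degree c \<le> 1" "c \<noteq> 0" "poly c (s k) = 0" "\<forall>x\<in>{0..a}. 0 \<le> poly c x"
    proof (cases "s k < 0")
      case True
      then show ?thesis by (intro that[of "[:- s k, 1:]"]) auto
    next
      case False
      then show ?thesis using \<open>s k \<notin> {0..a}\<close> by (intro that[of "[:s k, -1:]"]) auto
    qed
    have "0 < integral {0..a} (\<lambda>x. poly (c * Q) x * x powr (\<beta> - 1))"
      using c \<open>Q \<noteq> 0\<close> Q_nonneg by (intro integral_poly_weight_pos[OF assms(1,2)]) auto
    then show False using single[OF c(1)] c(3) by simp
  qed
  have "0 < integral {0..a} (\<lambda>x. poly (1 * Q) x * x powr (\<beta> - 1))"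
    using \<open>Q \<noteq> 0\<close> Q_nonneg by (intro integral_poly_weight_pos[OF assms(1,2)]) auto
  then show "0 < w k" using single[of 1] Q_nonneg[of "s k"]
    by (simp add: zero_less_mult_iff)
qed

lemma inverse_fact_le_exp_div_pow:
  assumes "0 < m"
  shows "1 / fact m \<le> (exp 1 / real m) ^ m"
proof -
  have "summable (\<lambda>i. real m ^ i / fact i)"
    using summable_exp_generic[of "real m"] by (simp add: divide_inverse mult.commute)
  then have "(\<Sum>i\<in>{m}. real m ^ i / fact i) \<le> (\<Sum>i. real m ^ i / fact i)"
    by (intro sum_le_suminf) auto
  also have "\<dots> = exp (real m)" by (simp add: exp_def divide_inverse mult.commute)
  also have "\<dots> = exp 1 ^ m" using exp_of_nat_mult[of m 1] by simp
  finally have "real m ^ m / fact m \<le> exp 1 ^ m" by simp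
  have "1 / fact m = real m ^ m / fact m / real m ^ m" using assms by simp
  also have "\<dots> \<le> exp 1 ^ m / real m ^ m"
    by (rule divide_right_mono[OF \<open>real m ^ m / fact m \<le> exp 1 ^ m\<close>]) simp
  also have "\<dots> = (exp 1 / real m) ^ m" by (simp add: power_divide)
  finally show ?thesis .
qed

lemma gauss_jacobi_error_le:
  fixes f :: "real \<Rightarrow> real" and p :: "real poly"
  assumes "a > 0" and "\<beta> > 1" and rule: "gauss_jacobi_rule a \<beta> n s w"
    and "continuous_on {0..a} f"
    and p: "degree p < 2 * n" "\<forall>x\<in>{0..a}. \<bar>f x - poly p x\<bar> \<le> \<epsilon>"
  shows "\<bar>integral {0..a} (\<lambda>x. f x * x powr (\<beta> - 1)) - (\<Sum>k = 1..n. w k * f (s k))\<bar>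
           \<le> 2 * \<epsilon> * (a powr \<beta> / \<beta>)"
proof -
  have exact: "integral {0..a} (\<lambda>x. poly q x * x powr (\<beta> - 1)) = (\<Sum>k = 1..n. w k * poly q (s k))"
    if "degree q < 2 * n" for q
    using rule that unfolding gauss_jacobi_rule_def by simp
  have "0 < n" using p(1) by simp
  have "\<bar>integral {0..a} (\<lambda>x. f x * x powr (\<beta> - 1)) - (\<Sum>k = 1..n. w k * f (s k))\<bar>
      \<le> 2 * \<epsilon> * integral {0..a} (\<lambda>x. x powr (\<beta> - 1))"
  proof (rule positive_quadrature_error)
    show "continuous_on {0..a} (poly p)" by (rule continuous_on_poly) (rule continuous_on_id)
    show "continuous_on {0..a} (\<lambda>x. x powr (\<beta> - 1))"
      using assms(2) by (intro continuous_on_powr') (auto intro: continuous_intros)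
    show "\<forall>k\<in>{1..n}. s k \<in> {0..a} \<and> 0 \<le> w k"
      using gauss_jacobi_rule_nodes_weights[OF assms(1,2) rule] by (simp add: less_imp_le)
    show "integral {0..a} (\<lambda>x. x powr (\<beta> - 1)) = (\<Sum>k = 1..n. w k)"
      using exact[of 1] \<open>0 < n\<close> by simp
    show "integral {0..a} (\<lambda>x. poly p x * x powr (\<beta> - 1)) = (\<Sum>k = 1..n. w k * poly p (s k))"
      by (rule exact[OF p(1)])
  qed (use assms(4) p(2) in simp_all)
  also have "integral {0..a} (\<lambda>x. x powr (\<beta> - 1)) = a powr \<beta> / \<beta>"
    using integral_unique[OF has_integral_powr_from_0[of "\<beta> - 1" a]] assms by simp
  finally show ?thesis .
qed

lemma pow_div_fact_le_exp_pow:
  fixes x :: real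
  assumes "0 < n" and "0 \<le> x"
  shows "(x / 4) ^ (2 * n) / fact (2 * n) \<le> (exp 1 / 8) ^ (2 * n) * (x / real n) ^ (2 * n)"
proof -
  have "(x / 4) ^ (2 * n) / fact (2 * n) = (x / 4) ^ (2 * n) * (1 / fact (2 * n))" by simp
  also have "\<dots> \<le> (x / 4) ^ (2 * n) * (exp 1 / real (2 * n)) ^ (2 * n)"
    by (rule mult_left_mono[OF inverse_fact_le_exp_div_pow]) (use assms in simp_all)
  also have "\<dots> = (x / 4 * (exp 1 / real (2 * n))) ^ (2 * n)"
    by (rule power_mult_distrib[symmetric])
  also have "x / 4 * (exp 1 / real (2 * n)) = exp 1 / 8 * (x / real n)"
    by (simp add: field_simps)
  also have "(exp 1 / 8 * (x / real n)) ^ (2 * n) = (exp 1 / 8) ^ (2 * n) * (x / real n) ^ (2 * n)"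
    by (rule power_mult_distrib)
  finally show ?thesis .
qed

text \<open>Only (2n)! \<ge> (2n/e)^(2n) is used; the Stirling factor 2 sqrt(pi) n^(3/2) merely has
  to exceed 4.\<close>

lemma gauss_jacobi_constant_bound:
  fixes a t T A :: real and n :: nat
  assumes "a > 0" and "0 < t" and "t < T" and "n > 1" and "A > 0"
  shows "4 * A * (t * a / 4) ^ (2 * n) / fact (2 * n)
           < 2 * sqrt pi * A * real n powr (3/2) * (exp 1 / 8) ^ (2 * n) * (a * T / real n) ^ (2 * n)"
proof -
  have "t * a < a * T" using assms by (simp add: mult.commute[of t])
  then have "(t * a / 4) ^ (2 * n) < (a * T / 4) ^ (2 * n)"
    using assms by (intro power_strict_mono) simp_all
  then have "4 * A * (t * a / 4) ^ (2 * n) < 4 * A * (a * T / 4) ^ (2 * n)" using \<open>A > 0\<close> by simp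
  then have "4 * A * (t * a / 4) ^ (2 * n) / fact (2 * n) < 4 * A * ((a * T / 4) ^ (2 * n) / fact (2 * n))"
    by (simp add: divide_strict_right_mono)
  also have "\<dots> \<le> 4 * A * ((exp 1 / 8) ^ (2 * n) * (a * T / real n) ^ (2 * n))"
    using assms by (intro mult_left_mono pow_div_fact_le_exp_pow) simp_all
  also have "\<dots> \<le> 2 * sqrt pi * A * real n powr (3/2) * (exp 1 / 8) ^ (2 * n) * (a * T / real n) ^ (2 * n)"
  proof -
    have "1 \<le> sqrt pi" using pi_ge_two by simp
    have "real n powr 1 \<le> real n powr (3/2)" using assms(4) by (intro powr_mono) auto
    then have "2 \<le> real n powr (3/2)" using assms(4) by simp
    with \<open>1 \<le> sqrt pi\<close> have "1 * 2 \<le> sqrt pi * real n powr (3/2)" by (intro mult_mono) auto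
    then have "4 * A \<le> 2 * sqrt pi * A * real n powr (3/2)" using \<open>A > 0\<close> by simp
    moreover have "0 \<le> (exp 1 / 8) ^ (2 * n) * (a * T / real n) ^ (2 * n)" using assms by simp
    ultimately have "4 * A * ((exp 1 / 8) ^ (2 * n) * (a * T / real n) ^ (2 * n))
        \<le> (2 * sqrt pi * A * real n powr (3/2)) * ((exp 1 / 8) ^ (2 * n) * (a * T / real n) ^ (2 * n))"
      by (rule mult_right_mono)
    then show ?thesis by (simp only: mult.assoc)
  qed
  finally show ?thesis .
qed

theorem lemma2p4:
  fixes a T \<beta> t :: real and n :: nat and s w :: "nat \<Rightarrow> real"
  assumes "a > 0" and "T > 0" and "1 < \<beta>" and "\<beta> < 2" and "n > 1"
    and "gauss_jacobi_rule a \<beta> n s w"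
    and "0 < t" and "t < T"
  shows "\<bar>integral {0..a} (\<lambda>x. exp (- t * x) * x powr (\<beta> - 1))
           - (\<Sum>k = 1..n. w k * exp (- s k * t))\<bar>
         < 2 * sqrt pi * a powr \<beta> * real n powr (3/2) * (exp 1 / 8) ^ (2 * n)
             * (a * T / real n) ^ (2 * n)"
proof -
  define \<epsilon> where "\<epsilon> = 2 * (t * a / 4) ^ (2 * n) / fact (2 * n)"
  obtain p where p: "degree p < 2 * n" "\<forall>x\<in>{0..a}. \<bar>exp (- t * x) - poly p x\<bar> \<le> \<epsilon>"
    using exp_neg_poly_approx[of 0 a t "2 * n"] assms by (auto simp: \<epsilon>_def)
  have "\<bar>integral {0..a} (\<lambda>x. exp (- t * x) * x powr (\<beta> - 1)) - (\<Sum>k = 1..n. w k * exp (- t * s k))\<bar>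
      \<le> 2 * \<epsilon> * (a powr \<beta> / \<beta>)"
  proof (rule gauss_jacobi_error_le[OF assms(1,3,6) _ p])
    show "continuous_on {0..a} (\<lambda>x. exp (- t * x))" by (intro continuous_intros)
  qed
  also have "\<dots> \<le> 2 * \<epsilon> * a powr \<beta>"
    using assms by (intro mult_left_mono) (auto simp: \<epsilon>_def divide_le_eq)
  also have "\<dots> = 4 * a powr \<beta> * (t * a / 4) ^ (2 * n) / fact (2 * n)"
    by (simp add: \<epsilon>_def)
  also have "\<dots> < 2 * sqrt pi * a powr \<beta> * real n powr (3/2) * (exp 1 / 8) ^ (2 * n) * (a * T / real n) ^ (2 * n)"
    using assms by (intro gauss_jacobi_constant_bound) auto
  finally have "\<bar>integral {0..a} (\<lambda>x. exp (- t * x) * x powr (\<beta> - 1))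
      - (\<Sum>k = 1..n. w k * exp (- t * s k))\<bar>
      < 2 * sqrt pi * a powr \<beta> * real n powr (3/2) * (exp 1 / 8) ^ (2 * n) * (a * T / real n) ^ (2 * n)" .
  moreover have "(\<Sum>k = 1..n. w k * exp (- s k * t)) = (\<Sum>k = 1..n. w k * exp (- t * s k))"
    by (simp add: mult.commute)
  ultimately show ?thesis by simp
qed

end
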